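(* Let $z_0\in\mathbb{Z}_{\ge0}$, $z\in\mathbb{Z}_{>0}$, and $x,y\in[0,1)$ with $x<y$. Then $$\left|\frac{\big|\Phi[z_0,z_0+z)\cap[x,y)\big|}{z}-(y-x)\right|<\frac{2\lfloor\lg z\rfloor+2}{z}.$$
   Context: $\lg=\log_2$. The van der Corput function $\psi:\mathbb{Z}_{\ge0}\to[0,1)$ is $\psi(0)=0$ and, for $i>0$ written in binary as $i=\sum_{j=0}^{\lfloor\lg i\rfloor}\beta_j(i)2^j$ with $\beta_j(i)\in\{0,1\}$, $\psi(i)=\sum_{j}\beta_j(i)2^{-(j+1)}$. For integers $0\le z<z'$, $\Phi[z,z')=\{\psi(i): i\in\{z,z+1,\dots,z'-1\}\}$. *)

theory Defs
  imports Complex_Main "HOL-Library.Discrete_Functions"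
begin

definition beta :: "nat \<Rightarrow> nat \<Rightarrow> nat" where
  "beta j i = (i div 2 ^ j) mod 2"

text \<open>van der Corput function; psi 0 = 0 since all digits of 0 vanish\<close>
definition vdc :: "nat \<Rightarrow> real" where
  "vdc i = (if i = 0 then 0 else
     (\<Sum>j\<in>{0..floor_log i}. real (beta j i) / 2 ^ (j + 1)))"

definition Phi :: "nat \<Rightarrow> nat \<Rightarrow> real set" where
  "Phi z z' = vdc ` {z..<z'}"

end

theory Submission
  imports Defs
begin

text \<open>
  If r < 2^k then vdc (a * 2^k + r) = (rev_k r + vdc a) / 2^k, where rev_k reverses the last k
  binary digits. As rev_k permutes {0..<2^k}, the values of vdc on an aligned block
  [a * 2^k, (a + 1) * 2^k) are the points (m + c) / 2^k, m < 2^k, with c = vdc a \<in> [0, 1);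
  so such a block hits [x, y) exactly 2^k (y - x) times up to an error below 1. With
  k = floor_log z, a window of length z is cut at a multiple of 2^k into a part of length < 2^k
  and a part of length < 2^(k+1); following the binary expansions of these lengths, they are
  unions of at most k and k + 1 aligned blocks, so the total error is at most 2k + 1 < 2k + 2.
\<close>

fun bit_reverse :: "nat \<Rightarrow> nat \<Rightarrow> nat" where
  "bit_reverse 0 i = 0"
| "bit_reverse (Suc k) i = (i mod 2) * 2 ^ k + bit_reverse k (i div 2)"

lemma bit_reverse_less: "bit_reverse k i < 2 ^ k"
proof (induction k arbitrary: i)
  case (Suc k)
  have "i mod 2 = 0 \<or> i mod 2 = 1" by auto
  with Suc[of "i div 2"] show ?case by auto
qed simp

lemma bit_reverse_inj:
  "i < 2 ^ k \<Longrightarrow> j < 2 ^ k \<Longrightarrow> bit_reverse k i = bit_reverse k j \<Longrightarrow> i = j"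
proof (induction k arbitrary: i j)
  case (Suc k)
  have lt: "bit_reverse k (i div 2) < 2 ^ k" "bit_reverse k (j div 2) < 2 ^ k"
    by (rule bit_reverse_less)+
  have last_digit: "i mod 2 = j mod 2"
  proof (rule ccontr)
    assume "i mod 2 \<noteq> j mod 2"
    then have "i mod 2 = 0 \<and> j mod 2 = 1 \<or> i mod 2 = 1 \<and> j mod 2 = 0" by auto
    then show False using Suc.prems(3) lt by auto
  qed
  then have "bit_reverse k (i div 2) = bit_reverse k (j div 2)" using Suc.prems(3) by simp
  then have "i div 2 = j div 2" using Suc.IH Suc.prems(1,2) by auto
  with last_digit show ?case by (metis div_mult_mod_eq)
qed simp

lemma bij_betw_bit_reverse: "bij_betw (bit_reverse k) {..<2 ^ k} {..<2 ^ k}"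
proof -
  have inj: "inj_on (bit_reverse k) {..<2 ^ k}"
    by (rule inj_onI) (use bit_reverse_inj in auto)
  moreover have "bit_reverse k ` {..<2 ^ k} = {..<2 ^ k}"
    using bit_reverse_less inj by (intro card_subset_eq) (auto simp: card_image)
  ultimately show ?thesis unfolding bij_betw_def ..
qed

lemma bit_reverse_mult_power_add:
  "r < 2 ^ k \<Longrightarrow> bit_reverse (k + K) (a * 2 ^ k + r) = bit_reverse k r * 2 ^ K + bit_reverse K a"
proof (induction k arbitrary: r)
  case (Suc k)
  have shift: "a * 2 ^ Suc k + r = r + 2 * (a * 2 ^ k)" by simp
  have "(a * 2 ^ Suc k + r) mod 2 = r mod 2" "(a * 2 ^ Suc k + r) div 2 = a * 2 ^ k + r div 2"
    unfolding shift by simp_all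
  moreover have "r div 2 < 2 ^ k" using Suc.prems by auto
  ultimately show ?case using Suc.IH[of "r div 2"] by (simp add: algebra_simps power_add)
qed simp

lemma beta_Suc: "beta (Suc j) i = beta j (i div 2)"
  by (simp add: beta_def div_mult2_eq)

lemma digit_sum_eq_bit_reverse:
  "(\<Sum>j<k. real (beta j i) / 2 ^ (j + 1)) = bit_reverse k i / 2 ^ k"
proof (induction k arbitrary: i)
  case (Suc k)
  have "(\<Sum>j<Suc k. real (beta j i) / 2 ^ (j + 1))
      = real (i mod 2) / 2 + (\<Sum>j<k. real (beta j (i div 2)) / 2 ^ (j + 1)) / 2"
    by (subst sum.lessThan_Suc_shift) (simp add: beta_Suc sum_divide_distrib, simp add: beta_def)
  also have "\<dots> = bit_reverse (Suc k) i / 2 ^ Suc k"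
    using Suc[of "i div 2"] by (simp add: field_simps)
  finally show ?case .
qed simp

lemma vdc_eq_digit_sum:
  assumes "i < 2 ^ k"
  shows "vdc i = (\<Sum>j<k. real (beta j i) / 2 ^ (j + 1))"
proof (cases "i = 0")
  case True
  then show ?thesis by (simp add: vdc_def beta_def)
next
  case False
  let ?L = "floor_log i"
  have "2 ^ ?L \<le> i" using False floor_log_exp2_le by auto
  then have "?L < k" using assms by (metis le_less_trans nat_power_less_imp_less zero_less_numeral)
  then have split: "{..<k} = {0..?L} \<union> {Suc ?L..<k}" by auto
  have high_digits: "beta j i = 0" if "Suc ?L \<le> j" for j
  proof -
    have "i < 2 ^ Suc ?L" using floor_log_exp2_gt by simp
    also have "\<dots> \<le> 2 ^ j" using that by (rule power_increasing) simp
    finally show ?thesis by (simp add: beta_def)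
  qed
  show ?thesis
    unfolding split using False high_digits
    by (subst sum.union_disjoint) (auto simp: vdc_def)
qed

lemma vdc_eq_bit_reverse: "i < 2 ^ k \<Longrightarrow> vdc i = bit_reverse k i / 2 ^ k"
  by (simp only: vdc_eq_digit_sum digit_sum_eq_bit_reverse)

lemma inj_vdc: "inj vdc"
proof (rule injI)
  fix i j
  assume eq: "vdc i = vdc j"
  have "i < 2 ^ (i + j)" "j < 2 ^ (i + j)"
    by (rule less_le_trans[OF less_exp], simp)+
  with eq show "i = j"
    using vdc_eq_bit_reverse[of i "i + j"] vdc_eq_bit_reverse[of j "i + j"] bit_reverse_inj by auto
qed

lemma vdc_nonneg: "0 \<le> vdc i"
  using vdc_eq_bit_reverse[OF less_exp] by simp

lemma vdc_less_one: "vdc i < 1"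
proof -
  have "real (bit_reverse i i) < 2 ^ i"
    using bit_reverse_less[of i i] by (metis of_nat_less_iff of_nat_numeral of_nat_power)
  then show ?thesis using vdc_eq_bit_reverse[OF less_exp] by simp
qed

lemma vdc_mult_power_add:
  assumes "r < 2 ^ k"
  shows "vdc (a * 2 ^ k + r) = (bit_reverse k r + vdc a) / 2 ^ k"
proof -
  have "a * 2 ^ k + r < (a + 1) * 2 ^ k" using assms by simp
  also have "\<dots> \<le> 2 ^ a * 2 ^ k" using Suc_leI[OF less_exp[of a]] by (intro mult_right_mono) simp_all
  finally have "a * 2 ^ k + r < 2 ^ (k + a)" by (simp add: power_add mult.commute)
  then have "vdc (a * 2 ^ k + r) = bit_reverse (k + a) (a * 2 ^ k + r) / 2 ^ (k + a)"
    by (rule vdc_eq_bit_reverse)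
  also have "\<dots> = (bit_reverse k r + bit_reverse a a / 2 ^ a) / 2 ^ k"
    by (simp only: bit_reverse_mult_power_add[OF assms]) (simp add: field_simps power_add)
  also have "bit_reverse a a / 2 ^ a = vdc a"
    using vdc_eq_bit_reverse[OF less_exp] by simp
  finally show ?thesis .
qed

definition vdc_count :: "nat \<Rightarrow> nat \<Rightarrow> real \<Rightarrow> real \<Rightarrow> nat" where
  "vdc_count b n x y = card {i \<in> {b..<b + n}. vdc i \<in> {x..<y}}"

definition vdc_discrepancy :: "nat \<Rightarrow> nat \<Rightarrow> real \<Rightarrow> real \<Rightarrow> real" where
  "vdc_discrepancy b n x y = real (vdc_count b n x y) - real n * (y - x)"

lemma vdc_count_add: "vdc_count b (n + m) x y = vdc_count b n x y + vdc_count (b + n) m x y"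
proof -
  have "{i \<in> {b..<b + (n + m)}. vdc i \<in> {x..<y}}
      = {i \<in> {b..<b + n}. vdc i \<in> {x..<y}} \<union> {i \<in> {b + n..<b + n + m}. vdc i \<in> {x..<y}}"
    by auto
  moreover have "card ({i \<in> {b..<b + n}. vdc i \<in> {x..<y}} \<union> {i \<in> {b + n..<b + n + m}. vdc i \<in> {x..<y}})
      = card {i \<in> {b..<b + n}. vdc i \<in> {x..<y}} + card {i \<in> {b + n..<b + n + m}. vdc i \<in> {x..<y}}"
    by (intro card_Un_disjoint) auto
  ultimately show ?thesis
    unfolding vdc_count_def by (simp add: add.assoc)
qed

lemma vdc_discrepancy_add:
  "vdc_discrepancy b (n + m) x y = vdc_discrepancy b n x y + vdc_discrepancy (b + n) m x y"
  unfolding vdc_discrepancy_def vdc_count_add by (simp add: algebra_simps)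

lemma vdc_discrepancy_0 [simp]: "vdc_discrepancy b 0 x y = 0"
  by (simp add: vdc_discrepancy_def vdc_count_def)

lemma vdc_count_aligned_block:
  "vdc_count (a * 2 ^ k) (2 ^ k) x y = card {m \<in> {..<2 ^ k}. (real m + vdc a) / 2 ^ k \<in> {x..<y}}"
proof -
  let ?b = "a * 2 ^ k"
  have "bij_betw (\<lambda>r. ?b + r) {..<2 ^ k} {?b..<?b + 2 ^ k}"
    unfolding bij_betw_def lessThan_atLeast0 by (simp add: add.commute)
  then have "bij_betw (\<lambda>r. ?b + r) {r \<in> {..<2 ^ k}. vdc (?b + r) \<in> {x..<y}}
      {i \<in> {?b..<?b + 2 ^ k}. vdc i \<in> {x..<y}}"
    by (rule bij_betw_Collect) simp
  then have "vdc_count ?b (2 ^ k) x y = card {r \<in> {..<2 ^ k}. vdc (?b + r) \<in> {x..<y}}"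
    unfolding vdc_count_def by (rule bij_betw_same_card[symmetric])
  also have "\<dots> = card {m \<in> {..<2 ^ k}. (real m + vdc a) / 2 ^ k \<in> {x..<y}}"
    by (rule bij_betw_same_card[of "bit_reverse k"], rule bij_betw_Collect[OF bij_betw_bit_reverse])
      (simp add: vdc_mult_power_add)
  finally show ?thesis .
qed

lemma card_nat_interval_discrepancy:
  fixes A B :: real
  assumes "-1 < A" "A \<le> B"
  shows "\<bar>real (card {m::nat. A \<le> m \<and> m < B}) - (B - A)\<bar> < 1"
proof -
  have ceil_A: "0 \<le> \<lceil>A\<rceil>" and ceil_mono: "\<lceil>A\<rceil> \<le> \<lceil>B\<rceil>"
    using assms by (linarith, simp add: ceiling_mono)
  then have ceil_B: "0 \<le> \<lceil>B\<rceil>" by linarith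
  have "{m::nat. A \<le> m \<and> m < B} = {nat \<lceil>A\<rceil>..<nat \<lceil>B\<rceil>}"
  proof (rule set_eqI)
    fix m :: nat
    have "A \<le> m \<longleftrightarrow> \<lceil>A\<rceil> \<le> int m" "m < B \<longleftrightarrow> int m < \<lceil>B\<rceil>"
      by (simp_all add: ceiling_le_iff less_ceiling_iff)
    then show "m \<in> {m::nat. A \<le> m \<and> m < B} \<longleftrightarrow> m \<in> {nat \<lceil>A\<rceil>..<nat \<lceil>B\<rceil>}"
      using ceil_A by auto
  qed
  then have "real (card {m::nat. A \<le> m \<and> m < B}) = real (nat \<lceil>B\<rceil>) - real (nat \<lceil>A\<rceil>)"
    using ceil_mono by (simp add: of_nat_diff nat_mono)
  also have "\<dots> = \<lceil>B\<rceil> - \<lceil>A\<rceil>"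
    using ceil_A ceil_B by simp
  finally have "real (card {m::nat. A \<le> m \<and> m < B}) = \<lceil>B\<rceil> - \<lceil>A\<rceil>" .
  then show ?thesis by linarith
qed

lemma exists_less_dvd_add:
  fixes N b :: nat
  assumes "0 < N"
  obtains s where "s < N" "N dvd b + s"
proof (cases "N dvd b")
  case True
  then show ?thesis using assms that[of 0] by simp
next
  case False
  have "b + (N - b mod N) = (b - b mod N) + N"
    using mod_less_divisor[OF assms, of b] mod_less_eq_dividend[of b N] by linarith
  also have "\<dots> = N * (b div N + 1)" by (simp add: minus_mod_eq_mult_div)
  finally have "b + (N - b mod N) = N * (b div N + 1)" .
  then show ?thesis using False assms that[of "N - b mod N"] by (simp add: dvd_eq_mod_eq_0)
qed

context
  fixes x y :: real
  assumes x_nonneg: "0 \<le> x" and x_le_y: "x \<le> y" and y_le_1: "y \<le> 1"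
begin

lemma vdc_discrepancy_aligned_block:
  assumes "2 ^ k dvd b"
  shows "\<bar>vdc_discrepancy b (2 ^ k) x y\<bar> < 1"
proof -
  obtain a where b: "b = a * 2 ^ k" using assms by (auto simp: mult.commute)
  define N :: real where "N = 2 ^ k"
  define c where "c = vdc a"
  have N: "0 < N" unfolding N_def by simp
  have c: "0 \<le> c" "c < 1" unfolding c_def by (rule vdc_nonneg vdc_less_one)+
  have "(real m + c) / N \<in> {x..<y} \<longleftrightarrow> N * x - c \<le> m \<and> m < N * y - c" for m :: nat
    using N by (auto simp: field_simps)
  moreover have "m < (2::nat) ^ k" if "m < N * y - c" for m :: nat
  proof -
    have "N * y \<le> N" using N y_le_1 by (simp add: mult_left_le)
    then have "real m < N" using that c(1) by linarith
    then show ?thesis unfolding N_def by (metis of_nat_less_iff of_nat_numeral of_nat_power)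
  qed
  ultimately have "{m::nat \<in> {..<2 ^ k}. (real m + c) / N \<in> {x..<y}} = {m::nat. N * x - c \<le> m \<and> m < N * y - c}"
    by auto
  moreover have "0 \<le> N * x" "N * x \<le> N * y"
    using N x_nonneg x_le_y by (simp_all add: mult_left_mono)
  then have "-1 < N * x - c" "N * x - c \<le> N * y - c"
    using c by linarith+
  ultimately have "\<bar>real (vdc_count b (2 ^ k) x y) - (N * y - N * x)\<bar> < 1"
    using card_nat_interval_discrepancy[of "N * x - c" "N * y - c"]
    unfolding b vdc_count_aligned_block by (simp add: N_def c_def)
  then show ?thesis
    unfolding vdc_discrepancy_def N_def by (simp add: algebra_simps)
qed

lemma vdc_discrepancy_aligned_start:
  "2 ^ k dvd b \<Longrightarrow> n < 2 * 2 ^ k \<Longrightarrow> \<bar>vdc_discrepancy b n x y\<bar> \<le> k + 1"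
proof (induction k arbitrary: b n)
  case 0
  then have "n = 0 \<or> n = 1" by auto
  then show ?case using vdc_discrepancy_aligned_block[of 0 b] by auto
next
  case (Suc k)
  have dvd_b: "2 ^ k dvd b" using Suc.prems(1) by (rule dvd_trans[rotated]) simp
  show ?case
  proof (cases "n < 2 ^ Suc k")
    case True
    then show ?thesis using Suc.IH[OF dvd_b, of n] by simp
  next
    case False
    define n' where "n' = n - 2 ^ Suc k"
    have n: "n = 2 ^ Suc k + n'" "n' < 2 * 2 ^ k"
      using False Suc.prems(2) unfolding n'_def by simp_all
    have "2 ^ k dvd b + 2 ^ Suc k" using dvd_b by (simp add: dvd_add_right_iff)
    then have "\<bar>vdc_discrepancy (b + 2 ^ Suc k) n' x y\<bar> \<le> k + 1" using Suc.IH n(2) by blast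
    moreover have "\<bar>vdc_discrepancy b (2 ^ Suc k) x y\<bar> < 1"
      using Suc.prems(1) by (rule vdc_discrepancy_aligned_block)
    ultimately show ?thesis unfolding n(1) vdc_discrepancy_add by simp
  qed
qed

lemma vdc_discrepancy_aligned_end:
  "2 ^ k dvd b + n \<Longrightarrow> n < 2 ^ k \<Longrightarrow> \<bar>vdc_discrepancy b n x y\<bar> \<le> k"
proof (induction k arbitrary: n)
  case (Suc k)
  have dvd_end: "2 ^ k dvd b + n" using Suc.prems(1) by (rule dvd_trans[rotated]) simp
  show ?case
  proof (cases "n < 2 ^ k")
    case True
    then show ?thesis using Suc.IH[OF dvd_end] by simp
  next
    case False
    define n' where "n' = n - 2 ^ k"
    have n: "n = n' + 2 ^ k" "n' < 2 ^ k"
      using False Suc.prems(2) unfolding n'_def by simp_all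
    have dvd_mid: "2 ^ k dvd b + n'"
      using dvd_end unfolding n(1) by (simp add: add.assoc[symmetric] dvd_add_left_iff)
    have "\<bar>vdc_discrepancy b n' x y\<bar> \<le> k" using Suc.IH[OF dvd_mid n(2)] .
    moreover have "\<bar>vdc_discrepancy (b + n') (2 ^ k) x y\<bar> < 1"
      using dvd_mid by (rule vdc_discrepancy_aligned_block)
    ultimately show ?thesis unfolding n(1) vdc_discrepancy_add by simp
  qed
qed simp

lemma vdc_discrepancy_floor_log:
  assumes "0 < n"
  shows "\<bar>vdc_discrepancy b n x y\<bar> \<le> 2 * floor_log n + 1"
proof -
  define k where "k = floor_log n"
  have n_lower: "2 ^ k \<le> n" and n_upper: "n < 2 * 2 ^ k"
    unfolding k_def using assms by (simp_all add: floor_log_exp2_le floor_log_exp2_gt)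
  obtain s where s: "s < 2 ^ k" "2 ^ k dvd b + s"
    using exists_less_dvd_add[of "2 ^ k"] by auto
  define d where "d = n - s"
  have n: "n = s + d" "d < 2 * 2 ^ k" using s(1) n_lower n_upper unfolding d_def by auto
  have "\<bar>vdc_discrepancy b s x y\<bar> \<le> k"
    using s(2,1) by (rule vdc_discrepancy_aligned_end)
  moreover have "\<bar>vdc_discrepancy (b + s) d x y\<bar> \<le> k + 1"
    using s(2) n(2) by (rule vdc_discrepancy_aligned_start)
  ultimately show ?thesis unfolding n(1) vdc_discrepancy_add k_def by simp
qed

end

theorem lemmaB5:
  fixes z0 z :: nat and x y :: real
  assumes "z > 0" and "0 \<le> x" and "x < y" and "y < 1"
  shows "\<bar>real (card (Phi z0 (z0 + z) \<inter> {x..<y})) / real z - (y - x)\<bar>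
           < (2 * real_of_int \<lfloor>log 2 (real z)\<rfloor> + 2) / real z"
proof -
  have "Phi z0 (z0 + z) \<inter> {x..<y} = vdc ` {i \<in> {z0..<z0 + z}. vdc i \<in> {x..<y}}"
    unfolding Phi_def by auto
  then have count: "card (Phi z0 (z0 + z) \<inter> {x..<y}) = vdc_count z0 z x y"
    unfolding vdc_count_def using inj_vdc by (simp add: card_image inj_on_subset)
  have log: "real_of_int \<lfloor>log 2 (real z)\<rfloor> = real (floor_log z)"
    using assms(1) by (simp add: floor_log_altdef)
  have "real (card (Phi z0 (z0 + z) \<inter> {x..<y})) / real z - (y - x)
      = vdc_discrepancy z0 z x y / real z"
    using assms(1) unfolding count vdc_discrepancy_def by (simp add: field_simps)
  then have "\<bar>real (card (Phi z0 (z0 + z) \<inter> {x..<y})) / real z - (y - x)\<bar>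
      = \<bar>vdc_discrepancy z0 z x y\<bar> / real z"
    by simp
  also have "\<dots> < (2 * real (floor_log z) + 2) / real z"
    using vdc_discrepancy_floor_log[of x y z z0] assms by (intro divide_strict_right_mono) auto
  finally show ?thesis unfolding log .
qed

end
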